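(* Let $\psi$ be an injective map from the positive integers to the positive integers and let $A=\{\psi(n): n\ge 1\}$. Let $\alpha$ be a positive integer. For every nonnegative integer $n$, \[ p^{A}(n)=\sum_{(N_0,N_1,N_2,\dots)}\ \prod_{j\ge 0} p^{A}_{\alpha}(N_j), \] where the sum runs over all sequences $(N_0,N_1,N_2,\dots)$ of nonnegative integers satisfying $n=\sum_{i\ge 0}(\alpha+1)^{i}N_i$.
   Context: For a set $A$ of positive integers and a positive integer $\alpha$, $p^{A}_{\alpha}(n)$ denotes the number of partitions of $n$ into parts from $A$ in which each part occurs at most $\alpha$ times, and $p^{A}(n)$ denotes the number of partitions of $n$ into parts from $A$ with no restriction on multiplicities. By convention $p^{A}_{\alpha}(0)=p^{A}(0)=1$, so the product on the right is effectively finite. *)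

theory Defs
  imports Main "HOL-Library.Multiset"
begin

definition partA :: "nat set \<Rightarrow> nat \<Rightarrow> nat" where
  "partA A n = card {M :: nat multiset. set_mset M \<subseteq> A \<and> sum_mset M = n}"

definition partA_bounded :: "nat set \<Rightarrow> nat \<Rightarrow> nat \<Rightarrow> nat" where
  "partA_bounded A \<alpha> n = card {M :: nat multiset. set_mset M \<subseteq> A \<and> sum_mset M = n
                                  \<and> (\<forall>k. count M k \<le> \<alpha>)}"

text \<open>Sequences (N_0, N_1, ...) of nonnegative integers with n = sum (alpha+1)^i N_i
  (necessarily finitely supported).\<close>

definition base_seqs :: "nat \<Rightarrow> nat \<Rightarrow> (nat \<Rightarrow> nat) set" where
  "base_seqs \<alpha> n = {N. finite {i. N i \<noteq> 0} \<and>
                        (\<Sum>i\<in>{i. N i \<noteq> 0}. (\<alpha> + 1) ^ i * N i) = n}"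

end

theory Submission
  imports Defs
begin

text \<open>Write every multiplicity of a partition of \<open>n\<close> in base \<open>q = \<alpha> + 1\<close>. The lowest digits form a
  partition of some \<open>k\<close> with all multiplicities at most \<open>\<alpha>\<close>, and the remaining digits form \<open>q\<close> copies
  of a partition of some \<open>m\<close>, where \<open>k + q m = n\<close>. Hence \<open>p\<^sup>A(n) = \<Sum>\<^bsub>k + q m = n\<^esub> p\<^sup>A\<^sub>\<alpha>(k) p\<^sup>A(m)\<close>.
  Splitting off the entry \<open>N\<^sub>0\<close> of a sequence with \<open>n = \<Sum> q\<^sup>i N\<^sub>i\<close> leaves a sequence for \<open>m\<close>, so the
  right-hand side obeys the same recursion. Both sides are \<open>1\<close> at \<open>n = 0\<close>, and \<open>m < n\<close> for
  \<open>n > 0\<close> because \<open>q \<ge> 2\<close>, so they agree everywhere.\<close>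

definition mset_mod :: "nat \<Rightarrow> 'a multiset \<Rightarrow> 'a multiset" where
  "mset_mod q M = Abs_multiset (\<lambda>a. count M a mod q)"

definition mset_div :: "nat \<Rightarrow> 'a multiset \<Rightarrow> 'a multiset" where
  "mset_div q M = Abs_multiset (\<lambda>a. count M a div q)"

lemma count_mset_mod [simp]: "count (mset_mod q M) a = count M a mod q"
proof -
  have "{a. 0 < count M a mod q} \<subseteq> set_mset M"
    by (auto simp: subset_iff) (metis count_eq_zero_iff mod_0 less_irrefl)
  then show ?thesis
    unfolding mset_mod_def by (subst count_Abs_multiset) (auto intro: finite_subset)
qed

lemma count_mset_div [simp]: "count (mset_div q M) a = count M a div q"
proof -
  have "{a. 0 < count M a div q} \<subseteq> set_mset M"
    by (auto simp: subset_iff) (metis count_eq_zero_iff div_0 less_irrefl)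
  then show ?thesis
    unfolding mset_div_def by (subst count_Abs_multiset) (auto intro: finite_subset)
qed

lemma mset_mod_plus_repeat_mset_div: "mset_mod q M + repeat_mset q (mset_div q M) = M"
  by (rule multiset_eqI) simp

lemma mset_digits_unique:
  assumes "\<forall>a. count X a < q" and "M = X + repeat_mset q Y"
  shows "mset_mod q M = X" and "mset_div q M = Y"
proof -
  have "q > 0"
    using assms(1) by (metis not_less_zero neq0_conv)
  then show "mset_mod q M = X" and "mset_div q M = Y"
    using assms by (auto intro!: multiset_eqI)
qed

lemma set_mset_repeat_mset_subset: "set_mset (repeat_mset q M) \<subseteq> set_mset M"
  by (auto simp flip: count_greater_zero_iff)

lemma set_mset_mset_mod_subset: "set_mset (mset_mod q M) \<subseteq> set_mset M"
  by (metis mset_mod_plus_repeat_mset_div mset_subset_eq_add_left set_mset_mono)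

lemma set_mset_mset_div_subset: "set_mset (mset_div q M) \<subseteq> set_mset M"
  by (auto simp flip: count_greater_zero_iff intro: less_le_trans[OF _ div_le_dividend])

lemma sum_mset_repeat_mset:
  fixes M :: "'a::comm_semiring_1 multiset"
  shows "sum_mset (repeat_mset q M) = of_nat q * sum_mset M"
  by (induction M) (simp_all add: algebra_simps)

definition digit_splits :: "nat \<Rightarrow> nat \<Rightarrow> (nat \<times> nat) set" where
  "digit_splits q n = {(k, m). k + q * m = n}"

lemma finite_digit_splits: "q > 0 \<Longrightarrow> finite (digit_splits q n)"
  by (rule finite_subset[of _ "{..n} \<times> {..n}"]) (auto simp: digit_splits_def trans_le_add2)

lemma digit_splits_snd_less:
  assumes "(k, m) \<in> digit_splits q n" and "q \<ge> 2" and "n > 0"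
  shows "m < n"
proof -
  have "k + q * m = n"
    using assms(1) by (simp add: digit_splits_def)
  moreover have "m = 0 \<or> m < q * m"
    using assms(2) by auto
  ultimately show ?thesis
    using assms(3) by linarith
qed

lemma digit_recursion_unique:
  fixes f h :: "nat \<Rightarrow> 'a::comm_semiring_1"
  assumes "q \<ge> 2" and "f 0 = h 0"
    and "\<And>n. n > 0 \<Longrightarrow> f n = (\<Sum>(k, m)\<in>digit_splits q n. P k * f m)"
    and "\<And>n. n > 0 \<Longrightarrow> h n = (\<Sum>(k, m)\<in>digit_splits q n. P k * h m)"
  shows "f n = h n"
proof (induction n rule: less_induct)
  case (less n)
  show ?case
  proof (cases "n = 0")
    case False
    then have "(\<Sum>(k, m)\<in>digit_splits q n. P k * f m) = (\<Sum>(k, m)\<in>digit_splits q n. P k * h m)"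
      using less assms(1) digit_splits_snd_less by (intro sum.cong) auto
    with False show ?thesis
      using assms(3,4) by simp
  qed (use assms(2) in simp)
qed

definition partitions_from :: "nat set \<Rightarrow> nat \<Rightarrow> nat multiset set" where
  "partitions_from A n = {M. set_mset M \<subseteq> A \<and> sum_mset M = n}"

definition bounded_partitions :: "nat set \<Rightarrow> nat \<Rightarrow> nat \<Rightarrow> nat multiset set" where
  "bounded_partitions A \<alpha> n = {M \<in> partitions_from A n. \<forall>a. count M a \<le> \<alpha>}"

lemma partA_eq_card: "partA A n = card (partitions_from A n)"
  by (simp add: partA_def partitions_from_def)

lemma partA_bounded_eq_card: "partA_bounded A \<alpha> n = card (bounded_partitions A \<alpha> n)"
  by (simp add: partA_bounded_def bounded_partitions_def partitions_from_def conj_assoc)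

lemma size_le_sum_mset: "0 \<notin># M \<Longrightarrow> size M \<le> sum_mset (M :: nat multiset)"
proof (induction M)
  case (add x M)
  then show ?case by (cases x) auto
qed simp

lemma finite_partitions_from:
  assumes "0 \<notin> A"
  shows "finite (partitions_from A n)"
proof (rule finite_subset)
  show "partitions_from A n \<subseteq> (\<Union>s\<le>n. multisets_of_size {..n} s)"
  proof
    fix M assume M: "M \<in> partitions_from A n"
    then have "size M \<le> n"
      using assms size_le_sum_mset[of M] by (auto simp: partitions_from_def)
    moreover have "set_mset M \<subseteq> {..n}"
      using M by (auto simp: partitions_from_def dest: multi_member_split)
    ultimately show "M \<in> (\<Union>s\<le>n. multisets_of_size {..n} s)"
      by (auto simp: multisets_of_size_def)
  qed
qed auto

lemma partitions_from_0: "0 \<notin> A \<Longrightarrow> partitions_from A 0 = {{#}}"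
  by (auto simp: partitions_from_def) (metis multiset_nonemptyE subsetD)

lemma bounded_partitions_0: "0 \<notin> A \<Longrightarrow> bounded_partitions A \<alpha> 0 = {{#}}"
  by (auto simp: bounded_partitions_def partitions_from_0)

lemma bij_betw_digit_split_partitions:
  "bij_betw (\<lambda>(_, X, Y). X + repeat_mset (Suc \<alpha>) Y)
    (Sigma (digit_splits (Suc \<alpha>) n) (\<lambda>(k, m). bounded_partitions A \<alpha> k \<times> partitions_from A m))
    (partitions_from A n)"
proof -
  define q where "q = Suc \<alpha>"
  define f :: "(nat \<times> nat) \<times> nat multiset \<times> nat multiset \<Rightarrow> nat multiset"
    where "f = (\<lambda>(_, X, Y). X + repeat_mset q Y)"
  define g where "g M = ((sum_mset (mset_mod q M), sum_mset (mset_div q M)), mset_mod q M, mset_div q M)"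
    for M :: "nat multiset"
  define S where "S = Sigma (digit_splits q n) (\<lambda>(k, m). bounded_partitions A \<alpha> k \<times> partitions_from A m)"
  have g_f: "g (f u) = u" if "u \<in> S" for u
  proof -
    obtain k m X Y where u: "u = ((k, m), X, Y)" and "X \<in> bounded_partitions A \<alpha> k"
      and "Y \<in> partitions_from A m"
      using \<open>u \<in> S\<close> by (auto simp: S_def)
    then have "\<forall>a. count X a < q" and "sum_mset X = k" and "sum_mset Y = m"
      by (auto simp: bounded_partitions_def partitions_from_def q_def less_Suc_eq_le)
    then show ?thesis
      using mset_digits_unique[of X q] by (simp add: u f_def g_def)
  qed
  have f_g: "f (g M) = M" for M
    by (simp add: f_def g_def mset_mod_plus_repeat_mset_div)
  have f_in: "f u \<in> partitions_from A n" if "u \<in> S" for u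
  proof -
    obtain k m X Y where u: "u = ((k, m), X, Y)" and "k + q * m = n"
      and "X \<in> partitions_from A k" and "Y \<in> partitions_from A m"
      using \<open>u \<in> S\<close> by (auto simp: S_def digit_splits_def bounded_partitions_def)
    then show ?thesis
      using set_mset_repeat_mset_subset[of q Y]
      by (auto simp: f_def partitions_from_def sum_mset_repeat_mset)
  qed
  have g_in: "g M \<in> S" if "M \<in> partitions_from A n" for M
  proof -
    have "n = sum_mset (mset_mod q M + repeat_mset q (mset_div q M))"
      using that by (simp add: partitions_from_def mset_mod_plus_repeat_mset_div)
    then have "sum_mset (mset_mod q M) + q * sum_mset (mset_div q M) = n"
      by (simp add: sum_mset_repeat_mset)
    moreover have "count (mset_mod q M) a \<le> \<alpha>" for a
      by (simp add: q_def)
    ultimately show ?thesis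
      using that set_mset_mset_mod_subset[of q M] set_mset_mset_div_subset[of q M]
      by (auto simp: S_def g_def digit_splits_def bounded_partitions_def partitions_from_def)
  qed
  have "bij_betw f S (partitions_from A n)"
    by (rule bij_betw_byWitness[where f' = g]) (use g_f f_g f_in g_in in blast)+
  then show ?thesis
    unfolding f_def S_def q_def .
qed

lemma finite_bounded_partitions: "0 \<notin> A \<Longrightarrow> finite (bounded_partitions A \<alpha> n)"
  by (rule finite_subset[OF _ finite_partitions_from]) (auto simp: bounded_partitions_def)

lemma card_partitions_from_digit_split:
  assumes "0 \<notin> A"
  shows "card (partitions_from A n) = (\<Sum>(k, m)\<in>digit_splits (Suc \<alpha>) n.
           card (bounded_partitions A \<alpha> k) * card (partitions_from A m))"
proof -
  have "card (partitions_from A n) = card (Sigma (digit_splits (Suc \<alpha>) n)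
          (\<lambda>(k, m). bounded_partitions A \<alpha> k \<times> partitions_from A m))"
    using bij_betw_same_card[OF bij_betw_digit_split_partitions] by simp
  also have "\<dots> = (\<Sum>(k, m)\<in>digit_splits (Suc \<alpha>) n.
                    card (bounded_partitions A \<alpha> k) * card (partitions_from A m))"
    using assms
    by (subst card_SigmaI)
       (auto simp: finite_digit_splits finite_partitions_from finite_bounded_partitions
         card_cartesian_product split_def)
  finally show ?thesis .
qed

lemma support_case_nat_subset: "{i. case_nat k N i \<noteq> 0} \<subseteq> insert 0 (Suc ` {i. N i \<noteq> 0})"
proof
  fix i
  assume "i \<in> {i. case_nat k N i \<noteq> 0}"
  then show "i \<in> insert 0 (Suc ` {i. N i \<noteq> 0})"
    by (cases i) auto
qed

lemma finite_support_case_nat: "finite {i. case_nat k N i \<noteq> 0} \<longleftrightarrow> finite {i. N i \<noteq> 0}"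
proof
  assume "finite {i. case_nat k N i \<noteq> 0}"
  moreover have "{i. N i \<noteq> 0} = Suc -` {i. case_nat k N i \<noteq> 0}"
    by auto
  ultimately show "finite {i. N i \<noteq> 0}"
    by (metis finite_vimageI inj_Suc)
next
  assume "finite {i. N i \<noteq> 0}"
  with support_case_nat_subset show "finite {i. case_nat k N i \<noteq> 0}"
    by (auto intro: finite_subset)
qed

lemma sum_support_case_nat:
  fixes g :: "nat \<Rightarrow> nat \<Rightarrow> 'a::comm_monoid_add"
  assumes "finite {i. N i \<noteq> 0}" and "\<And>i. g i 0 = 0"
  shows "(\<Sum>i | case_nat k N i \<noteq> 0. g i (case_nat k N i)) = g 0 k + (\<Sum>i | N i \<noteq> 0. g (Suc i) (N i))"
proof -
  have "(\<Sum>i | case_nat k N i \<noteq> 0. g i (case_nat k N i))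
      = (\<Sum>i\<in>insert 0 (Suc ` {i. N i \<noteq> 0}). g i (case_nat k N i))"
    using assms support_case_nat_subset by (intro sum.mono_neutral_left) (auto split: nat.split_asm)
  also have "\<dots> = g 0 k + (\<Sum>i | N i \<noteq> 0. g (Suc i) (N i))"
    using assms(1) by (simp add: sum.reindex)
  finally show ?thesis .
qed

lemma prod_support_case_nat:
  fixes g :: "nat \<Rightarrow> nat \<Rightarrow> 'a::comm_monoid_mult"
  assumes "finite {i. N i \<noteq> 0}" and "\<And>i. g i 0 = 1"
  shows "(\<Prod>i | case_nat k N i \<noteq> 0. g i (case_nat k N i)) = g 0 k * (\<Prod>i | N i \<noteq> 0. g (Suc i) (N i))"
proof -
  have "(\<Prod>i | case_nat k N i \<noteq> 0. g i (case_nat k N i))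
      = (\<Prod>i\<in>insert 0 (Suc ` {i. N i \<noteq> 0}). g i (case_nat k N i))"
    using assms support_case_nat_subset by (intro prod.mono_neutral_left) (auto split: nat.split_asm)
  also have "\<dots> = g 0 k * (\<Prod>i | N i \<noteq> 0. g (Suc i) (N i))"
    using assms(1) by (simp add: prod.reindex)
  finally show ?thesis .
qed

definition base_value :: "nat \<Rightarrow> (nat \<Rightarrow> nat) \<Rightarrow> nat" where
  "base_value q N = (\<Sum>i | N i \<noteq> 0. q ^ i * N i)"

lemma in_base_seqs_iff: "N \<in> base_seqs \<alpha> n \<longleftrightarrow> finite {i. N i \<noteq> 0} \<and> base_value (Suc \<alpha>) N = n"
  by (simp add: base_seqs_def base_value_def)

lemma base_value_case_nat:
  "finite {i. N i \<noteq> 0} \<Longrightarrow> base_value q (case_nat k N) = k + q * base_value q N"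
  unfolding base_value_def
  by (subst sum_support_case_nat[where g = "\<lambda>i x. q ^ i * x"]) (simp_all add: sum_distrib_left mult.assoc)

lemma case_nat_in_base_seqs_iff:
  assumes "N \<in> base_seqs \<alpha> m"
  shows "case_nat k N \<in> base_seqs \<alpha> n \<longleftrightarrow> k + Suc \<alpha> * m = n"
  using assms unfolding in_base_seqs_iff finite_support_case_nat
  by (auto simp: base_value_case_nat)

lemma case_nat_shift: "case_nat (N 0) (\<lambda>i. N (Suc i)) = N"
  by (rule ext) (simp split: nat.split)

lemma bij_betw_case_nat_base_seqs:
  "bij_betw (\<lambda>((k, _), N). case_nat k N)
    (Sigma (digit_splits (Suc \<alpha>) n) (\<lambda>(_, m). base_seqs \<alpha> m)) (base_seqs \<alpha> n)"
proof -
  define f :: "(nat \<times> nat) \<times> (nat \<Rightarrow> nat) \<Rightarrow> nat \<Rightarrow> nat"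
    where "f = (\<lambda>((k, _), N). case_nat k N)"
  define g where "g N = ((N 0, base_value (Suc \<alpha>) (\<lambda>i. N (Suc i))), \<lambda>i. N (Suc i))"
    for N :: "nat \<Rightarrow> nat"
  define S where "S = Sigma (digit_splits (Suc \<alpha>) n) (\<lambda>(_, m). base_seqs \<alpha> m)"
  have g_f: "g (f u) = u" if "u \<in> S" for u
    using that by (auto simp: S_def f_def g_def in_base_seqs_iff)
  have f_g: "f (g N) = N" for N
    by (simp add: f_def g_def case_nat_shift)
  have f_in: "f u \<in> base_seqs \<alpha> n" if "u \<in> S" for u
    using that by (auto simp: S_def f_def digit_splits_def case_nat_in_base_seqs_iff)
  have g_in: "g N \<in> S" if "N \<in> base_seqs \<alpha> n" for N
  proof -
    have "case_nat (N 0) (\<lambda>i. N (Suc i)) \<in> base_seqs \<alpha> n"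
      using that by (simp add: case_nat_shift)
    then have "finite {i. N (Suc i) \<noteq> 0}"
      unfolding in_base_seqs_iff finite_support_case_nat by blast
    then have "(\<lambda>i. N (Suc i)) \<in> base_seqs \<alpha> (base_value (Suc \<alpha>) (\<lambda>i. N (Suc i)))"
      by (simp add: in_base_seqs_iff)
    with \<open>case_nat (N 0) (\<lambda>i. N (Suc i)) \<in> base_seqs \<alpha> n\<close> show ?thesis
      by (simp add: S_def g_def digit_splits_def case_nat_in_base_seqs_iff)
  qed
  have "bij_betw f S (base_seqs \<alpha> n)"
    by (rule bij_betw_byWitness[where f' = g]) (use g_f f_g f_in g_in in blast)+
  then show ?thesis
    unfolding f_def S_def .
qed

lemma finite_base_seqs:
  assumes "\<alpha> \<ge> 1"
  shows "finite (base_seqs \<alpha> n)"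
proof (rule finite_subset)
  show "base_seqs \<alpha> n \<subseteq> {N. \<forall>i. (i \<in> {..<n} \<longrightarrow> N i \<in> {..n}) \<and> (i \<notin> {..<n} \<longrightarrow> N i = 0)}"
  proof
    fix N
    assume N: "N \<in> base_seqs \<alpha> n"
    have "N i \<le> n \<and> (n \<le> i \<longrightarrow> N i = 0)" for i
    proof (cases "N i = 0")
      case False
      have "Suc \<alpha> ^ i * N i \<le> n"
        using N False member_le_sum[of i "{i. N i \<noteq> 0}" "\<lambda>i. Suc \<alpha> ^ i * N i"]
        by (simp add: in_base_seqs_iff base_value_def)
      moreover have "N i \<le> Suc \<alpha> ^ i * N i" and "Suc \<alpha> ^ i \<le> Suc \<alpha> ^ i * N i"
        using False by simp_all
      moreover have "i < Suc \<alpha> ^ i"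
        using assms less_exp[of i] power_mono[of 2 "Suc \<alpha>" i] by linarith
      ultimately show ?thesis
        by linarith
    qed simp
    then show "N \<in> {N. \<forall>i. (i \<in> {..<n} \<longrightarrow> N i \<in> {..n}) \<and> (i \<notin> {..<n} \<longrightarrow> N i = 0)}"
      by auto
  qed
qed (rule finite_set_of_finite_funs; simp)

lemma base_seqs_0: "base_seqs \<alpha> 0 = {\<lambda>_. 0}"
  by (auto simp: base_seqs_def)

lemma sum_base_seqs_digit_split:
  fixes P :: "nat \<Rightarrow> 'a::comm_semiring_1"
  assumes "\<alpha> \<ge> 1" and "P 0 = 1"
  shows "(\<Sum>N\<in>base_seqs \<alpha> n. \<Prod>j | N j \<noteq> 0. P (N j)) =
    (\<Sum>(k, m)\<in>digit_splits (Suc \<alpha>) n. P k * (\<Sum>N\<in>base_seqs \<alpha> m. \<Prod>j | N j \<noteq> 0. P (N j)))"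
proof -
  have "(\<Sum>N\<in>base_seqs \<alpha> n. \<Prod>j | N j \<noteq> 0. P (N j)) =
      (\<Sum>((k, _), N)\<in>Sigma (digit_splits (Suc \<alpha>) n) (\<lambda>(_, m). base_seqs \<alpha> m).
         \<Prod>j | case_nat k N j \<noteq> 0. P (case_nat k N j))"
    by (subst sum.reindex_bij_betw[OF bij_betw_case_nat_base_seqs, symmetric]) (simp add: split_def)
  also have "\<dots> = (\<Sum>((k, _), N)\<in>Sigma (digit_splits (Suc \<alpha>) n) (\<lambda>(_, m). base_seqs \<alpha> m).
         P k * (\<Prod>j | N j \<noteq> 0. P (N j)))"
    using assms(2) prod_support_case_nat[where g = "\<lambda>_. P"]
    by (intro sum.cong) (auto simp: in_base_seqs_iff simp del: neq0_conv)
  also have "\<dots> = (\<Sum>(k, m)\<in>digit_splits (Suc \<alpha>) n. \<Sum>N\<in>base_seqs \<alpha> m. P k * (\<Prod>j | N j \<noteq> 0. P (N j)))"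
    using sum.Sigma[OF finite_digit_splits, of "Suc \<alpha>" n "\<lambda>(_, m). base_seqs \<alpha> m"
        "\<lambda>(k, _) N. P k * (\<Prod>j | N j \<noteq> 0. P (N j))"] finite_base_seqs[OF assms(1)]
    by (simp add: split_def)
  finally show ?thesis
    by (simp add: sum_distrib_left split_def)
qed

theorem mainTheorem2:
  fixes \<psi> :: "nat \<Rightarrow> nat" and \<alpha> n :: nat and A :: "nat set"
  assumes "inj_on \<psi> {1..}"
    and "\<psi> ` {1..} \<subseteq> {1..}"
    and "A = \<psi> ` {1..}"
    and "\<alpha> \<ge> 1"
  shows "partA A n =
    (\<Sum>N\<in>base_seqs \<alpha> n. \<Prod>j\<in>{j. N j \<noteq> 0}. partA_bounded A \<alpha> (N j))"
proof -
  \<comment> \<open>Only \<open>0 \<notin> A\<close> matters.\<close>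
  have "0 \<notin> A"
    using assms(2,3) by auto
  then have P0: "partA_bounded A \<alpha> 0 = 1"
    by (simp add: partA_bounded_eq_card bounded_partitions_0)
  define W where "W m = (\<Sum>N\<in>base_seqs \<alpha> m. \<Prod>j | N j \<noteq> 0. partA_bounded A \<alpha> (N j))" for m
  have "card (partitions_from A n) = W n"
  proof (rule digit_recursion_unique[where q = "Suc \<alpha>" and P = "partA_bounded A \<alpha>"
        and f = "\<lambda>m. card (partitions_from A m)" and h = W])
    show "Suc \<alpha> \<ge> 2"
      using assms(4) by simp
    show "card (partitions_from A 0) = W 0"
      using \<open>0 \<notin> A\<close> by (simp add: W_def partitions_from_0 base_seqs_0)
    show "card (partitions_from A m) = (\<Sum>(k, l)\<in>digit_splits (Suc \<alpha>) m.
        partA_bounded A \<alpha> k * card (partitions_from A l))" if "m > 0" for m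
      using \<open>0 \<notin> A\<close> by (simp add: card_partitions_from_digit_split partA_bounded_eq_card)
    show "W m = (\<Sum>(k, l)\<in>digit_splits (Suc \<alpha>) m. partA_bounded A \<alpha> k * W l)" for m
      unfolding W_def by (rule sum_base_seqs_digit_split[where P = "partA_bounded A \<alpha>", OF assms(4) P0])
  qed
  then show ?thesis
    by (simp add: partA_eq_card W_def)
qed

end
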